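(* Let $X\in\mathbb{R}^{n\times d}$ and let $f:\mathbb{R}^n\to(-\infty,\infty]$, $g:\mathbb{R}^d\to(-\infty,\infty]$ be proper lower semicontinuous convex functions such that there exists $\beta\in\mathrm{relint}(\mathrm{dom}(g))$ with $X\beta\in\mathrm{relint}(\mathrm{dom}(f))$, and such that $P(\beta):=f(X\beta)+g(\beta)$ attains its infimum over $\mathbb{R}^d$. Let $D(\theta):=-f^\star(-\theta)-g^\star(X^\top\theta)$, assume $f^\star$ is $L$-strongly convex for some $L\ge0$, and let $\hat\theta$ be a maximizer of $D$ over $\mathbb{R}^n$. Let $u:\mathbb{R}^n\to[-\infty,\infty]$ satisfy $D(\theta)\le u(\theta)$ for all $\theta\in\mathbb{R}^n$. Then for every $\tilde\theta\in\mathbb{R}^n$, \[ \hat\theta\in\mathcal{R}(\tilde\theta,u):=\{\theta\mid l(\theta;\tilde\theta)\le u(\theta)\},\qquad l(\theta;\tilde\theta)=\frac{L}{2}\|\theta-\tilde\theta\|_2^2+D(\tilde\theta). \]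
   Context: $h^\star(v)=\sup_z v^\top z-h(z)$ denotes the Fenchel conjugate; $\mathrm{dom}(h)=\{z:|h(z)|<\infty\}$; $\mathrm{relint}$ denotes relative interior. *)

theory Defs
  imports "HOL-Analysis.Analysis"
begin

definition edom :: "('a \<Rightarrow> ereal) \<Rightarrow> 'a set" where
  "edom h = {z. \<bar>h z\<bar> < \<infinity>}"

definition proper_fun :: "('a \<Rightarrow> ereal) \<Rightarrow> bool" where
  "proper_fun h \<longleftrightarrow> (\<forall>z. h z \<noteq> -\<infinity>) \<and> (\<exists>z. h z < \<infinity>)"

definition econvex :: "('a::real_vector \<Rightarrow> ereal) \<Rightarrow> bool" where
  "econvex h \<longleftrightarrow> convex {(z, r::real). h z \<le> ereal r}"

definition elsc :: "('a::topological_space \<Rightarrow> ereal) \<Rightarrow> bool" where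
  "elsc h \<longleftrightarrow> (\<forall>z. h z \<le> Liminf (at z) h)"

definition fconj :: "('a::real_inner \<Rightarrow> ereal) \<Rightarrow> 'a \<Rightarrow> ereal" where
  "fconj h v = (SUP z. ereal (v \<bullet> z) - h z)"

definition strongly_econvex :: "real \<Rightarrow> ('a::real_inner \<Rightarrow> ereal) \<Rightarrow> bool" where
  "strongly_econvex L h \<longleftrightarrow> econvex (\<lambda>z. h z - ereal (L / 2 * (norm z)\<^sup>2))"

end

(* D is the sum of the L-strongly concave map theta |-> -f*(-theta) and the concave map
   theta |-> -g*(X^T theta) (a Fenchel conjugate is always convex), so D is L-strongly concave.
   Comparing D at its maximizer with D on the segment towards any theta~ yields the quadratic
   growth D(theta~) + L/2 |theta^ - theta~|^2 <= D(theta^) <= u(theta^). *)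

theory Submission
  imports Defs
begin

lemma econvex_iff:
  "econvex h \<longleftrightarrow>
    (\<forall>x y r s t. h x \<le> ereal r \<longrightarrow> h y \<le> ereal s \<longrightarrow> 0 \<le> t \<longrightarrow> t \<le> 1 \<longrightarrow>
       h ((1 - t) *\<^sub>R x + t *\<^sub>R y) \<le> ereal ((1 - t) * r + t * s))"
  unfolding econvex_def convex_alt by auto

lemma econvexD:
  assumes "econvex h" "h x \<le> ereal r" "h y \<le> ereal s" "0 \<le> t" "t \<le> 1"
  shows "h ((1 - t) *\<^sub>R x + t *\<^sub>R y) \<le> ereal ((1 - t) * r + t * s)"
  using assms unfolding econvex_iff by blast

lemma econvex_compose_linear:
  assumes "linear A" "econvex h"
  shows "econvex (\<lambda>z. h (A z))"
  using assms unfolding econvex_iff by (simp add: linear_add linear_scale)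

lemma econvex_add:
  assumes "econvex \<phi>" "econvex \<psi>" "\<And>z. \<phi> z \<noteq> -\<infinity>" "\<And>z. \<psi> z \<noteq> -\<infinity>"
  shows "econvex (\<lambda>z. \<phi> z + \<psi> z)"
  unfolding econvex_iff
proof (intro allI impI)
  fix x y r s and t :: real
  assume x: "\<phi> x + \<psi> x \<le> ereal r" and y: "\<phi> y + \<psi> y \<le> ereal s" and t: "0 \<le> t" "t \<le> 1"
  obtain a a' where a: "\<phi> x = ereal a" and a': "\<phi> y = ereal a'"
    using x y assms(3,4)[of x] assms(3,4)[of y]
    by (cases "\<phi> x"; cases "\<phi> y"; cases "\<psi> x"; cases "\<psi> y") auto
  have "\<psi> x \<le> ereal (r - a)" "\<psi> y \<le> ereal (s - a')"
    using x y a a' assms(4)[of x] assms(4)[of y] by (cases "\<psi> x"; cases "\<psi> y"; simp)+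
  then have \<psi>: "\<psi> ((1 - t) *\<^sub>R x + t *\<^sub>R y) \<le> ereal ((1 - t) * (r - a) + t * (s - a'))"
    using econvexD[OF assms(2) _ _ t] by blast
  have "\<phi> ((1 - t) *\<^sub>R x + t *\<^sub>R y) \<le> ereal ((1 - t) * a + t * a')"
    using assms(1) a a' t by (intro econvexD) auto
  from this \<psi>
  have "\<phi> ((1 - t) *\<^sub>R x + t *\<^sub>R y) + \<psi> ((1 - t) *\<^sub>R x + t *\<^sub>R y)
      \<le> ereal ((1 - t) * a + t * a') + ereal ((1 - t) * (r - a) + t * (s - a'))"
    by (rule add_mono)
  then show "\<phi> ((1 - t) *\<^sub>R x + t *\<^sub>R y) + \<psi> ((1 - t) *\<^sub>R x + t *\<^sub>R y)
      \<le> ereal ((1 - t) * r + t * s)"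
    by (simp add: algebra_simps)
qed

lemma econvex_fconj: "econvex (fconj h)"
  unfolding econvex_iff fconj_def
proof (intro allI impI SUP_least)
  fix x y r s w and t :: real
  assume x: "(SUP z. ereal (x \<bullet> z) - h z) \<le> ereal r"
    and y: "(SUP z. ereal (y \<bullet> z) - h z) \<le> ereal s" and t: "0 \<le> t" "t \<le> 1"
  have xw: "ereal (x \<bullet> w) - h w \<le> ereal r" and yw: "ereal (y \<bullet> w) - h w \<le> ereal s"
    using order_trans[OF SUP_upper x] order_trans[OF SUP_upper y] by auto
  show "ereal (((1 - t) *\<^sub>R x + t *\<^sub>R y) \<bullet> w) - h w \<le> ereal ((1 - t) * r + t * s)"
  proof (cases "h w")
    case (real q)
    have "((1 - t) *\<^sub>R x + t *\<^sub>R y) \<bullet> w - q = (1 - t) * (x \<bullet> w - q) + t * (y \<bullet> w - q)"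
      by (simp add: inner_add_left algebra_simps)
    also have "\<dots> \<le> (1 - t) * r + t * s"
      using xw yw t real by (intro add_mono mult_left_mono) auto
    finally show ?thesis using real by simp
  qed (use xw in auto)
qed

lemma fconj_not_MInf:
  assumes "h z < \<infinity>"
  shows "fconj h v \<noteq> -\<infinity>"
proof -
  have "ereal (v \<bullet> z) - h z \<le> fconj h v"
    unfolding fconj_def by (rule SUP_upper) simp
  moreover have "ereal (v \<bullet> z) - h z \<noteq> -\<infinity>"
    using assms by (cases "h z") auto
  ultimately show ?thesis by auto
qed

lemma strongly_econvex_add:
  assumes "strongly_econvex L \<phi>" "econvex \<psi>" "\<And>z. \<phi> z \<noteq> -\<infinity>" "\<And>z. \<psi> z \<noteq> -\<infinity>"
  shows "strongly_econvex L (\<lambda>z. \<phi> z + \<psi> z)"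
proof -
  have "econvex (\<lambda>z. (\<phi> z - ereal (L / 2 * (norm z)\<^sup>2)) + \<psi> z)"
    using assms unfolding strongly_econvex_def
    by (intro econvex_add) (auto simp: minus_ereal_def)
  moreover have "(\<phi> z - ereal c) + \<psi> z = \<phi> z + \<psi> z - ereal c" for z c
    using assms(3,4)[of z] by (cases "\<phi> z"; cases "\<psi> z") auto
  ultimately show ?thesis unfolding strongly_econvex_def by simp
qed

lemma strongly_econvex_uminus:
  assumes "strongly_econvex L h"
  shows "strongly_econvex L (\<lambda>z. h (- z))"
  using econvex_compose_linear[OF linear_uminus assms[unfolded strongly_econvex_def]]
  unfolding strongly_econvex_def by simp

lemma norm_convex_combination_sq:
  fixes a b :: "'a::real_inner"
  shows "(norm ((1 - t) *\<^sub>R a + t *\<^sub>R b))\<^sup>2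
    = (1 - t) * (norm a)\<^sup>2 + t * (norm b)\<^sup>2 - t * (1 - t) * (norm (a - b))\<^sup>2"
  unfolding power2_norm_eq_inner
  by (simp add: inner_add_left inner_add_right inner_diff_left inner_diff_right
      inner_commute algebra_simps)

lemma strongly_econvexD:
  assumes "strongly_econvex L h" "h x = ereal r" "h y = ereal s" "0 \<le> t" "t \<le> 1"
  shows "h ((1 - t) *\<^sub>R x + t *\<^sub>R y)
    \<le> ereal ((1 - t) * r + t * s - L / 2 * t * (1 - t) * (norm (x - y))\<^sup>2)"
proof -
  let ?q = "\<lambda>z. L / 2 * (norm z)\<^sup>2"
  have "h ((1 - t) *\<^sub>R x + t *\<^sub>R y) - ereal (?q ((1 - t) *\<^sub>R x + t *\<^sub>R y))
      \<le> ereal ((1 - t) * (r - ?q x) + t * (s - ?q y))"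
    using assms unfolding strongly_econvex_def by (intro econvexD) auto
  then have "h ((1 - t) *\<^sub>R x + t *\<^sub>R y)
      \<le> ereal ((1 - t) * (r - ?q x) + t * (s - ?q y) + ?q ((1 - t) *\<^sub>R x + t *\<^sub>R y))"
    by (simp add: ereal_minus_le_iff)
  also have "\<dots> = ereal ((1 - t) * r + t * s - L / 2 * t * (1 - t) * (norm (x - y))\<^sup>2)"
    unfolding norm_convex_combination_sq by (simp add: field_simps)
  finally show ?thesis .
qed

lemma strongly_econvex_minimizer_growth:
  assumes "strongly_econvex L h" and minimizer: "\<And>z. h a \<le> h z"
  shows "h a + ereal (L / 2 * (norm (b - a))\<^sup>2) \<le> h b"
proof (cases "h a = -\<infinity> \<or> h b = \<infinity>")
  case False
  then obtain \<alpha> \<beta> where \<alpha>: "h a = ereal \<alpha>" and \<beta>: "h b = ereal \<beta>"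
    using minimizer[of b] by (cases "h a"; cases "h b") auto
  define c where "c = L / 2 * (norm (b - a))\<^sup>2"
  have "s * c \<le> \<beta> - \<alpha>" if s: "0 < s" "s < 1" for s
  proof -
    have "ereal \<alpha> \<le> h ((1 - s) *\<^sub>R b + s *\<^sub>R a)"
      using minimizer \<alpha> by metis
    also have "\<dots> \<le> ereal ((1 - s) * \<beta> + s * \<alpha> - L / 2 * s * (1 - s) * (norm (b - a))\<^sup>2)"
      using assms(1) \<alpha> \<beta> s by (intro strongly_econvexD) auto
    finally have "(1 - s) * (s * c) \<le> (1 - s) * (\<beta> - \<alpha>)"
      unfolding c_def by (simp add: algebra_simps)
    then show ?thesis using s by simp
  qed
  then have "c \<le> \<beta> - \<alpha>" by (rule field_le_mult_one_interval)
  then show ?thesis using \<alpha> \<beta> unfolding c_def by simp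
qed auto

theorem theorem4:
  fixes X :: "real^'d^'n"
    and f :: "real^'n \<Rightarrow> ereal" and g :: "real^'d \<Rightarrow> ereal"
    and L :: real and \<theta>hat :: "real^'n" and u :: "real^'n \<Rightarrow> ereal"
  assumes f: "proper_fun f" "elsc f" "econvex f"
    and g: "proper_fun g" "elsc g" "econvex g"
    and qual: "\<exists>\<beta>. \<beta> \<in> rel_interior (edom g) \<and> X *v \<beta> \<in> rel_interior (edom f)"
    and attain: "\<exists>\<beta>0. \<forall>\<beta>. f (X *v \<beta>0) + g \<beta>0 \<le> f (X *v \<beta>) + g \<beta>"
    and L: "L \<ge> 0" "strongly_econvex L (fconj f)"
    and max: "\<forall>\<theta>. - fconj f (- \<theta>) - fconj g (transpose X *v \<theta>)
                   \<le> - fconj f (- \<theta>hat) - fconj g (transpose X *v \<theta>hat)"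
    and ub: "\<forall>\<theta>. - fconj f (- \<theta>) - fconj g (transpose X *v \<theta>) \<le> u \<theta>"
  shows "\<forall>\<theta>t. ereal (L / 2 * (norm (\<theta>hat - \<theta>t))\<^sup>2)
                + (- fconj f (- \<theta>t) - fconj g (transpose X *v \<theta>t)) \<le> u \<theta>hat"
proof
  fix \<theta>t
  define P where "P \<theta> = fconj f (- \<theta>) + fconj g (transpose X *v \<theta>)" for \<theta>
  have fin: "fconj f v \<noteq> -\<infinity>" "fconj g w \<noteq> -\<infinity>" for v w
    using f(1) g(1) unfolding proper_fun_def by (metis fconj_not_MInf)+
  have D_eq: "- fconj f (- \<theta>) - fconj g (transpose X *v \<theta>) = - P \<theta>" for \<theta>
    using fin unfolding P_def by (cases "fconj f (- \<theta>)"; cases "fconj g (transpose X *v \<theta>)") auto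
  have "strongly_econvex L P"
    unfolding P_def using fin
    by (intro strongly_econvex_add strongly_econvex_uminus L(2)
        econvex_compose_linear[OF matrix_vector_mul_linear econvex_fconj])
  moreover have "P \<theta>hat \<le> P \<theta>" for \<theta>
    using max unfolding D_eq by simp
  ultimately have "P \<theta>hat + ereal (L / 2 * (norm (\<theta>t - \<theta>hat))\<^sup>2) \<le> P \<theta>t"
    by (rule strongly_econvex_minimizer_growth)
  then have "ereal (L / 2 * (norm (\<theta>hat - \<theta>t))\<^sup>2) - P \<theta>t \<le> - P \<theta>hat"
    by (cases "P \<theta>hat"; cases "P \<theta>t") (auto simp: norm_minus_commute)
  also have "\<dots> \<le> u \<theta>hat"
    using ub unfolding D_eq by blast
  finally show "ereal (L / 2 * (norm (\<theta>hat - \<theta>t))\<^sup>2)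
      + (- fconj f (- \<theta>t) - fconj g (transpose X *v \<theta>t)) \<le> u \<theta>hat"
    unfolding D_eq by (simp add: minus_ereal_def)
qed

end
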